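(* Let $f:\mathcal{S}\to\mathbb{R}$ be continuously differentiable with $f^{\inf}:=\inf_{X\in\mathcal{S}}f(X)>-\infty$, and suppose $f$ is layer-wise $(L^0,L^1)$-smooth with constants $L^0,L^1\in\mathbb{R}^p_+$. Fix $\varepsilon>0$ and let $X^0,X^1,\dots$ be the iterates of deterministic Gluon with radii $$t_i^k=\frac{\|\nabla_i f(X^k)\|_{(i)\star}}{L^0_i+L^1_i\|\nabla_i f(X^k)\|_{(i)\star}},$$ assumed well defined, i.e. $L^0_i+L^1_i\|\nabla_i f(X^k)\|_{(i)\star}>0$ whenever $\nabla_i f(X^k)\neq0$, and with $t_i^k:=0$ (so $X_i^{k+1}=X_i^k$) when $\nabla_i f(X^k)=0$. Let $\Delta^0:=f(X^0)-f^{\inf}$ and $L^1_{\max}:=\max_i L^1_i$. Then: (1) With $K:=\left\lceil \frac{2\Delta^0\sum_{i=1}^pL^0_i}{\varepsilon^2}+\frac{2\Delta^0L^1_{\max}}{\varepsilon}\right\rceil$ (provided $K\ge1$), $\min_{k=0,\dots,K-1}\sum_{i=1}^p\|\nabla_i f(X^k)\|_{(i)\star}\le\varepsilon$. (2) If moreover $L^1_i>0$ for all $i$, set $H:=\frac1p\sum_{j=1}^p\frac{1}{L^1_j}$ and $K:=\left\lceil \frac{2\Delta^0\sum_{i=1}^p \frac{L^0_i}{(L^1_i)^2}}{\varepsilon^2H^2}+\frac{2\Delta^0}{\varepsilon H}\right\rceil$; then (provided $K\ge1$) $\min_{k=0,\dots,K-1}\sum_{i=1}^p\frac{1/L^1_i}{H}\|\nabla_i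 f(X^k)\|_{(i)\star}\le\varepsilon$.
   Context: $\mathcal{S}=\mathcal{S}_1\times\cdots\times\mathcal{S}_p$ with $\mathcal{S}_i=\mathbb{R}^{m_i\times n_i}$; an element is written $X=[X_1,\dots,X_p]$. Each $\mathcal{S}_i$ carries the trace inner product $\langle X_i,Y_i\rangle_{(i)}=\operatorname{tr}(X_i^\top Y_i)$ and an arbitrary norm $\|\cdot\|_{(i)}$ with dual norm $\|Y_i\|_{(i)\star}=\sup_{\|Z_i\|_{(i)}\le 1}\langle Y_i,Z_i\rangle_{(i)}$. $\nabla_i f(X)\in\mathcal{S}_i$ denotes the block of the gradient of $f$ corresponding to $X_i$. Layer-wise $(L^0,L^1)$-smoothness: for all $i$ and all $X,Y\in\mathcal{S}$, $\|\nabla_i f(X)-\nabla_i f(Y)\|_{(i)\star}\le (L^0_i+L^1_i\|\nabla_i f(X)\|_{(i)\star})\|X_i-Y_i\|_{(i)}$. Deterministic Gluon: for $k=0,1,\dots$ and each $i$, given radius $t_i^k\ge0$, set $X_i^{k+1}\in\arg\min\{\langle \nabla_i f(X^k),X_i\rangle_{(i)}: \|X_i-X_i^k\|_{(i)}\le t_i^k\}$ (any minimizer) and $X^{k+1}=[X_1^{k+1},\dots,X_p^{k+1}]$. *)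

theory Defs
  imports Complex_Main
begin

text \<open>Blocks: a matrix in R^(m x n) is represented as a function nat => nat => real
  vanishing outside the index range {..<m} x {..<n}. An element of the product space
  S = S_0 x ... x S_(p-1) is a function nat => (block), vanishing for block index >= p.\<close>

type_synonym blk = "nat \<Rightarrow> nat \<Rightarrow> real"
type_synonym pt = "nat \<Rightarrow> blk"

definition mat_space :: "nat \<Rightarrow> nat \<Rightarrow> blk set" where
  "mat_space m n = {A. \<forall>r c. \<not> (r < m \<and> c < n) \<longrightarrow> A r c = 0}"

definition prod_space :: "nat \<Rightarrow> (nat \<Rightarrow> nat) \<Rightarrow> (nat \<Rightarrow> nat) \<Rightarrow> pt set" where
  "prod_space p m n = {X. (\<forall>i<p. X i \<in> mat_space (m i) (n i)) \<and> (\<forall>i\<ge>p. X i = (\<lambda>r c. 0))}"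

definition blk_add :: "blk \<Rightarrow> blk \<Rightarrow> blk" where
  "blk_add A B = (\<lambda>r c. A r c + B r c)"
definition blk_diff :: "blk \<Rightarrow> blk \<Rightarrow> blk" where
  "blk_diff A B = (\<lambda>r c. A r c - B r c)"
definition blk_scale :: "real \<Rightarrow> blk \<Rightarrow> blk" where
  "blk_scale a A = (\<lambda>r c. a * A r c)"

definition pt_add :: "pt \<Rightarrow> pt \<Rightarrow> pt" where
  "pt_add X Y = (\<lambda>i. blk_add (X i) (Y i))"
definition pt_diff :: "pt \<Rightarrow> pt \<Rightarrow> pt" where
  "pt_diff X Y = (\<lambda>i. blk_diff (X i) (Y i))"

definition tr_inner :: "nat \<Rightarrow> nat \<Rightarrow> blk \<Rightarrow> blk \<Rightarrow> real" where
  "tr_inner m n A B = (\<Sum>r<m. \<Sum>c<n. A r c * B r c)"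

definition S_inner :: "nat \<Rightarrow> (nat \<Rightarrow> nat) \<Rightarrow> (nat \<Rightarrow> nat) \<Rightarrow> pt \<Rightarrow> pt \<Rightarrow> real" where
  "S_inner p m n X Y = (\<Sum>i<p. tr_inner (m i) (n i) (X i) (Y i))"
definition S_norm :: "nat \<Rightarrow> (nat \<Rightarrow> nat) \<Rightarrow> (nat \<Rightarrow> nat) \<Rightarrow> pt \<Rightarrow> real" where
  "S_norm p m n X = sqrt (S_inner p m n X X)"

definition is_norm_on :: "nat \<Rightarrow> nat \<Rightarrow> (blk \<Rightarrow> real) \<Rightarrow> bool" where
  "is_norm_on m n N \<longleftrightarrow>
     (\<forall>A\<in>mat_space m n. 0 \<le> N A) \<and>
     (\<forall>A\<in>mat_space m n. N A = 0 \<longleftrightarrow> A = (\<lambda>r c. 0)) \<and>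
     (\<forall>a. \<forall>A\<in>mat_space m n. N (blk_scale a A) = \<bar>a\<bar> * N A) \<and>
     (\<forall>A\<in>mat_space m n. \<forall>B\<in>mat_space m n. N (blk_add A B) \<le> N A + N B)"

definition dual_norm :: "nat \<Rightarrow> nat \<Rightarrow> (blk \<Rightarrow> real) \<Rightarrow> blk \<Rightarrow> real" where
  "dual_norm m n N Y = Sup {tr_inner m n Y Z | Z. Z \<in> mat_space m n \<and> N Z \<le> 1}"

text \<open>f is continuously differentiable on S with gradient G (G X \<in> S for X \<in> S):
  Frechet differentiability w.r.t. the Euclidean structure of S (all norms on the
  finite-dimensional space S are equivalent), plus continuity of the gradient.\<close>
definition has_cont_gradient_on ::
  "nat \<Rightarrow> (nat \<Rightarrow> nat) \<Rightarrow> (nat \<Rightarrow> nat) \<Rightarrow> (pt \<Rightarrow> real) \<Rightarrow> (pt \<Rightarrow> pt) \<Rightarrow> bool" where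
  "has_cont_gradient_on p m n f G \<longleftrightarrow>
     (\<forall>X\<in>prod_space p m n. G X \<in> prod_space p m n) \<and>
     (\<forall>X\<in>prod_space p m n. \<forall>e>0. \<exists>d>0. \<forall>H\<in>prod_space p m n.
         S_norm p m n H < d \<longrightarrow>
         \<bar>f (pt_add X H) - f X - S_inner p m n (G X) H\<bar> \<le> e * S_norm p m n H) \<and>
     (\<forall>X\<in>prod_space p m n. \<forall>e>0. \<exists>d>0. \<forall>Y\<in>prod_space p m n.
         S_norm p m n (pt_diff Y X) < d \<longrightarrow> S_norm p m n (pt_diff (G Y) (G X)) < e)"

end

theory Submission
  imports Defs "HOL-Analysis.Elementary_Metric_Spaces"
begin

text \<open>
  Integrating the layer-wise smoothness bound along the segment from X^k to X^(k+1) gives a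
  descent lemma, and a linear minimisation step of radius t lowers the linear term by t ||g_i||_*.
  With the prescribed radii every Gluon step therefore decreases f by at least
  sum_i ||g_i||_*^2 / (2 (L0_i + L1_i ||g_i||_*)), and these decreases sum to at most Delta0.
  Each summand dominates u w_i ||g_i||_* - (u w_i)^2 (L0_i + L1_i ||g_i||_*) / 2 for every u. If
  w_i L1_i <= c and sum_i w_i ||g_i||_* > eps, the choice u = eps / B with
  B = sum_i w_i^2 L0_i + c eps yields a decrease above eps^2 / (2 B), which K steps cannot afford.
  Part (1) is w_i = 1, c = max_i L1_i; part (2) is w_i = 1 / (H L1_i), c = 1 / H.
  The dual norms are finite because all norms on R^(m x n) are equivalent, which is proved by
  Bolzano-Weierstrass.
\<close>

section \<open>Norms and dual norms on matrix blocks\<close>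

lemma mat_space_zero [simp]: "(\<lambda>r c. 0) \<in> mat_space m n"
  by (simp add: mat_space_def)

lemma mat_space_blk_add: "A \<in> mat_space m n \<Longrightarrow> B \<in> mat_space m n \<Longrightarrow> blk_add A B \<in> mat_space m n"
  by (simp add: mat_space_def blk_add_def)

lemma mat_space_blk_diff: "A \<in> mat_space m n \<Longrightarrow> B \<in> mat_space m n \<Longrightarrow> blk_diff A B \<in> mat_space m n"
  by (simp add: mat_space_def blk_diff_def)

lemma mat_space_blk_scale: "A \<in> mat_space m n \<Longrightarrow> blk_scale a A \<in> mat_space m n"
  by (simp add: mat_space_def blk_scale_def)

lemma tr_inner_zero_left [simp]: "tr_inner m n (\<lambda>r c. 0) Y = 0"
  and tr_inner_zero_right [simp]: "tr_inner m n Y (\<lambda>r c. 0) = 0"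
  by (simp_all add: tr_inner_def)

lemma tr_inner_blk_add_right: "tr_inner m n Y (blk_add A B) = tr_inner m n Y A + tr_inner m n Y B"
  by (simp add: tr_inner_def blk_add_def distrib_left sum.distrib)

lemma tr_inner_blk_diff_right: "tr_inner m n Y (blk_diff A B) = tr_inner m n Y A - tr_inner m n Y B"
  by (simp add: tr_inner_def blk_diff_def right_diff_distrib sum_subtractf)

lemma tr_inner_blk_diff_left: "tr_inner m n (blk_diff A B) Y = tr_inner m n A Y - tr_inner m n B Y"
  by (simp add: tr_inner_def blk_diff_def left_diff_distrib sum_subtractf)

lemma tr_inner_blk_scale_right: "tr_inner m n Y (blk_scale a A) = a * tr_inner m n Y A"
  by (simp add: tr_inner_def blk_scale_def sum_distrib_left mult_ac)

lemma tr_inner_blk_scale_left: "tr_inner m n (blk_scale a A) Y = a * tr_inner m n A Y"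
  by (simp add: tr_inner_def blk_scale_def sum_distrib_left mult_ac)

definition entry_sum_norm :: "nat \<Rightarrow> nat \<Rightarrow> blk \<Rightarrow> real" where
  "entry_sum_norm m n Z = (\<Sum>(r, c)\<in>{..<m} \<times> {..<n}. \<bar>Z r c\<bar>)"

definition unit_blk :: "nat \<Rightarrow> nat \<Rightarrow> blk" where
  "unit_blk a b = (\<lambda>r c. if r = a \<and> c = b then 1 else 0)"

lemma entry_sum_norm_blk_scale: "entry_sum_norm m n (blk_scale a Z) = \<bar>a\<bar> * entry_sum_norm m n Z"
  by (simp add: entry_sum_norm_def blk_scale_def abs_mult sum_distrib_left case_prod_beta)

lemma abs_entry_le_entry_sum_norm:
  assumes "r < m" "c < n"
  shows "\<bar>Z r c\<bar> \<le> entry_sum_norm m n Z"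
proof -
  have "\<bar>Z r c\<bar> = (\<lambda>(r, c). \<bar>Z r c\<bar>) (r, c)" by simp
  also have "\<dots> \<le> entry_sum_norm m n Z"
    unfolding entry_sum_norm_def using assms by (intro member_le_sum) auto
  finally show ?thesis .
qed

lemma tr_inner_le_entry_sum_norm:
  "tr_inner m n Y Z \<le> entry_sum_norm m n Y * entry_sum_norm m n Z"
proof -
  have "tr_inner m n Y Z = (\<Sum>(r, c)\<in>{..<m} \<times> {..<n}. Y r c * Z r c)"
    by (simp add: tr_inner_def sum.cartesian_product)
  also have "\<dots> \<le> (\<Sum>(r, c)\<in>{..<m} \<times> {..<n}. entry_sum_norm m n Y * \<bar>Z r c\<bar>)"
  proof -
    have "Y r c * Z r c \<le> entry_sum_norm m n Y * \<bar>Z r c\<bar>" if "r < m" "c < n" for r c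
    proof -
      have "Y r c * Z r c \<le> \<bar>Y r c\<bar> * \<bar>Z r c\<bar>"
        by (metis abs_ge_self abs_mult)
      also have "\<dots> \<le> entry_sum_norm m n Y * \<bar>Z r c\<bar>"
        using that by (simp add: abs_entry_le_entry_sum_norm mult_right_mono)
      finally show ?thesis .
    qed
    then show ?thesis by (intro sum_mono) auto
  qed
  also have "\<dots> = entry_sum_norm m n Y * entry_sum_norm m n Z"
    by (simp add: entry_sum_norm_def sum_distrib_left case_prod_beta)
  finally show ?thesis .
qed

lemma mat_space_convergent_subseq:
  fixes W :: "nat \<Rightarrow> blk"
  assumes W: "\<And>j. W j \<in> mat_space m n" and bound: "\<And>j r c. \<bar>W j r c\<bar> \<le> b"
  obtains \<sigma> W0 where "strict_mono \<sigma>" "W0 \<in> mat_space m n"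
    "\<And>r c. (\<lambda>j. W (\<sigma> j) r c) \<longlonglongrightarrow> W0 r c"
proof -
  have "bounded ((\<lambda>Z. Z (fst k) (snd k)) ` range W)" for k
    using bound by (intro boundedI[of _ b]) auto
  then have "\<forall>d\<subseteq>{..<m} \<times> {..<n}. \<exists>l \<sigma>. strict_mono \<sigma> \<and> (\<forall>e>0. \<forall>\<^sub>F j in sequentially.
      \<forall>k\<in>d. dist (W (\<sigma> j) (fst k) (snd k)) (l (fst k) (snd k)) < e)"
    by (intro compact_lemma_general[where unproj = "\<lambda>e r c. e (r, c)"]) auto
  then obtain l \<sigma> where \<sigma>: "strict_mono \<sigma>" and close: "\<forall>e>0. \<forall>\<^sub>F j in sequentially.
      \<forall>k\<in>{..<m} \<times> {..<n}. dist (W (\<sigma> j) (fst k) (snd k)) (l (fst k) (snd k)) < e"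
    by blast
  define W0 where "W0 = (\<lambda>r c. if r < m \<and> c < n then l r c else 0)"
  have "(\<lambda>j. W (\<sigma> j) r c) \<longlonglongrightarrow> W0 r c" for r c
  proof (cases "r < m \<and> c < n")
    case True
    show ?thesis
    proof (rule tendstoI)
      fix e :: real assume "0 < e"
      then have "\<forall>\<^sub>F j in sequentially. \<forall>k\<in>{..<m} \<times> {..<n}.
          dist (W (\<sigma> j) (fst k) (snd k)) (l (fst k) (snd k)) < e"
        using close by blast
      then show "\<forall>\<^sub>F j in sequentially. dist (W (\<sigma> j) r c) (W0 r c) < e"
        by (rule eventually_mono) (use True in \<open>auto simp: W0_def\<close>)
    qed
  next
    case False
    then have "W j r c = 0" for j
      using W by (auto simp: mat_space_def)
    then show ?thesis using False by (auto simp: W0_def)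
  qed
  moreover have "W0 \<in> mat_space m n" by (simp add: W0_def mat_space_def)
  ultimately show ?thesis using \<sigma> that by blast
qed

definition is_lmo_point :: "nat \<Rightarrow> nat \<Rightarrow> (blk \<Rightarrow> real) \<Rightarrow> blk \<Rightarrow> blk \<Rightarrow> real \<Rightarrow> blk \<Rightarrow> bool" where
  "is_lmo_point m n N g X t X' \<longleftrightarrow> X' \<in> mat_space m n \<and> N (blk_diff X' X) \<le> t \<and>
     (\<forall>Y\<in>mat_space m n. N (blk_diff Y X) \<le> t \<longrightarrow> tr_inner m n g X' \<le> tr_inner m n g Y)"

context
  fixes m n :: nat and N :: "blk \<Rightarrow> real"
  assumes norm: "is_norm_on m n N"
begin

lemma is_norm_on_nonneg: "A \<in> mat_space m n \<Longrightarrow> 0 \<le> N A"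
  using norm by (simp add: is_norm_on_def)

lemma is_norm_on_eq_0_iff: "A \<in> mat_space m n \<Longrightarrow> N A = 0 \<longleftrightarrow> A = (\<lambda>r c. 0)"
  using norm by (simp add: is_norm_on_def)

lemma is_norm_on_zero: "N (\<lambda>r c. 0) = 0"
  by (simp add: is_norm_on_eq_0_iff)

lemma is_norm_on_scale: "A \<in> mat_space m n \<Longrightarrow> N (blk_scale a A) = \<bar>a\<bar> * N A"
  using norm by (simp add: is_norm_on_def)

lemma is_norm_on_triangle:
  "A \<in> mat_space m n \<Longrightarrow> B \<in> mat_space m n \<Longrightarrow> N (blk_add A B) \<le> N A + N B"
  using norm by (simp add: is_norm_on_def)

lemma is_norm_on_le_entry_sum:
  assumes Z: "Z \<in> mat_space m n"
  shows "N Z \<le> (\<Sum>(r, c)\<in>{..<m} \<times> {..<n}. \<bar>Z r c\<bar> * N (unit_blk r c))"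
proof -
  have restrict: "N (\<lambda>r c. if (r, c) \<in> S then Z r c else 0) \<le> (\<Sum>(r, c)\<in>S. \<bar>Z r c\<bar> * N (unit_blk r c))"
    if "finite S" "S \<subseteq> {..<m} \<times> {..<n}" for S
    using that
  proof (induction S rule: finite_induct)
    case empty
    then show ?case by (simp add: is_norm_on_zero)
  next
    case (insert rc S)
    obtain r c where rc: "rc = (r, c)" by fastforce
    have split: "(\<lambda>r' c'. if (r', c') \<in> insert rc S then Z r' c' else 0) =
        blk_add (\<lambda>r' c'. if (r', c') \<in> S then Z r' c' else 0) (blk_scale (Z r c) (unit_blk r c))"
      using insert.hyps(2) by (auto simp: rc blk_add_def blk_scale_def unit_blk_def fun_eq_iff)
    have S: "(\<lambda>r' c'. if (r', c') \<in> S then Z r' c' else 0) \<in> mat_space m n"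
      using insert.prems by (auto simp: mat_space_def)
    have E: "unit_blk r c \<in> mat_space m n"
      using insert.prems by (auto simp: rc unit_blk_def mat_space_def)
    have "N (\<lambda>r' c'. if (r', c') \<in> insert rc S then Z r' c' else 0)
        \<le> N (\<lambda>r' c'. if (r', c') \<in> S then Z r' c' else 0) + \<bar>Z r c\<bar> * N (unit_blk r c)"
      unfolding split
      using is_norm_on_triangle[OF S mat_space_blk_scale[OF E]] is_norm_on_scale[OF E] by simp
    then show ?case using insert by (simp add: rc)
  qed
  moreover have "(\<lambda>r c. if (r, c) \<in> {..<m} \<times> {..<n} then Z r c else 0) = Z"
    using Z by (auto simp: mat_space_def fun_eq_iff)
  ultimately show ?thesis
    using restrict[of "{..<m} \<times> {..<n}"] by simp
qed

lemma is_norm_on_tendsto_zero: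
  assumes D: "\<And>j. D j \<in> mat_space m n" and lim: "\<And>r c. (\<lambda>j. D j r c) \<longlonglongrightarrow> 0"
  shows "(\<lambda>j. N (D j)) \<longlonglongrightarrow> 0"
proof (rule tendsto_sandwich)
  show "\<forall>\<^sub>F j in sequentially. 0 \<le> N (D j)"
    using D by (simp add: is_norm_on_nonneg)
  show "\<forall>\<^sub>F j in sequentially.
      N (D j) \<le> (\<Sum>(r, c)\<in>{..<m} \<times> {..<n}. \<bar>D j r c\<bar> * N (unit_blk r c))"
    using D by (simp add: is_norm_on_le_entry_sum)
  have "(\<lambda>j. \<Sum>(r, c)\<in>{..<m} \<times> {..<n}. \<bar>D j r c\<bar> * N (unit_blk r c))
      \<longlonglongrightarrow> (\<Sum>(r, c)\<in>{..<m} \<times> {..<n}. \<bar>0\<bar> * N (unit_blk r c))"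
    unfolding case_prod_beta by (intro tendsto_intros lim)
  then show "(\<lambda>j. \<Sum>(r, c)\<in>{..<m} \<times> {..<n}. \<bar>D j r c\<bar> * N (unit_blk r c)) \<longlonglongrightarrow> 0"
    by simp
qed simp

lemma is_norm_on_not_tendsto_zero:
  assumes W: "\<And>j. W j \<in> mat_space m n" and unit: "\<And>j. entry_sum_norm m n (W j) = 1"
  shows "\<not> (\<lambda>j. N (W j)) \<longlonglongrightarrow> 0"
proof
  assume to_zero: "(\<lambda>j. N (W j)) \<longlonglongrightarrow> 0"
  have "\<bar>W j r c\<bar> \<le> 1" for j r c
  proof (cases "r < m \<and> c < n")
    case True
    then show ?thesis using abs_entry_le_entry_sum_norm[of r m c n "W j"] unit by simp
  next
    case False
    then show ?thesis using W[of j] by (auto simp: mat_space_def)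
  qed
  then obtain \<sigma> W0 where \<sigma>: "strict_mono \<sigma>" and W0: "W0 \<in> mat_space m n"
    and lim: "\<And>r c. (\<lambda>j. W (\<sigma> j) r c) \<longlonglongrightarrow> W0 r c"
    using mat_space_convergent_subseq[of W, OF W] by blast
  have "(\<lambda>j. entry_sum_norm m n (W (\<sigma> j))) \<longlonglongrightarrow> entry_sum_norm m n W0"
    unfolding entry_sum_norm_def case_prod_beta by (intro tendsto_intros lim)
  then have "entry_sum_norm m n W0 = 1"
    using unit by (simp add: LIMSEQ_const_iff)
  moreover have "N W0 = 0"
  proof -
    have "N W0 \<le> N (blk_diff W0 (W (\<sigma> j))) + N (W (\<sigma> j))" for j
      using is_norm_on_triangle[OF mat_space_blk_diff[OF W0 W[of "\<sigma> j"]] W[of "\<sigma> j"]]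
      by (simp add: blk_add_def blk_diff_def)
    moreover have "(\<lambda>j. N (blk_diff W0 (W (\<sigma> j))) + N (W (\<sigma> j))) \<longlonglongrightarrow> 0"
    proof -
      have "(\<lambda>j. blk_diff W0 (W (\<sigma> j)) r c) \<longlonglongrightarrow> 0" for r c
        using tendsto_diff[OF tendsto_const[of "W0 r c"] lim[of r c]] by (simp add: blk_diff_def)
      then have "(\<lambda>j. N (blk_diff W0 (W (\<sigma> j)))) \<longlonglongrightarrow> 0"
        by (intro is_norm_on_tendsto_zero mat_space_blk_diff W0 W)
      moreover have "(\<lambda>j. N (W (\<sigma> j))) \<longlonglongrightarrow> 0"
        using LIMSEQ_subseq_LIMSEQ[OF to_zero \<sigma>] by (simp add: o_def)
      ultimately show ?thesis
        by (rule tendsto_add_zero)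
    qed
    ultimately have "N W0 \<le> 0"
      by (intro LIMSEQ_le_const[where X = "\<lambda>j. N (blk_diff W0 (W (\<sigma> j))) + N (W (\<sigma> j))"]) auto
    then show ?thesis
      using is_norm_on_nonneg[OF W0] by simp
  qed
  then have "W0 = (\<lambda>r c. 0)"
    using is_norm_on_eq_0_iff[OF W0] by simp
  ultimately show False
    by (simp add: entry_sum_norm_def)
qed

lemma entry_sum_norm_le_const_mult_norm:
  "\<exists>C>0. \<forall>Z\<in>mat_space m n. entry_sum_norm m n Z \<le> C * N Z"
proof (rule ccontr)
  assume no_const: "\<not> ?thesis"
  have "\<exists>Z. Z \<in> mat_space m n \<and> (real j + 1) * N Z < entry_sum_norm m n Z" for j
  proof (rule ccontr)
    assume "\<nexists>Z. Z \<in> mat_space m n \<and> (real j + 1) * N Z < entry_sum_norm m n Z"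
    then have "\<forall>Z\<in>mat_space m n. entry_sum_norm m n Z \<le> (real j + 1) * N Z"
      by (auto simp: not_less)
    moreover have "(0::real) < real j + 1" by simp
    ultimately show False using no_const by blast
  qed
  then obtain Z where Z: "\<And>j. Z j \<in> mat_space m n"
    and big: "\<And>j. (real j + 1) * N (Z j) < entry_sum_norm m n (Z j)"
    using choice[of "\<lambda>j Z. Z \<in> mat_space m n \<and> (real j + 1) * N Z < entry_sum_norm m n Z"]
    by blast
  have pos: "0 < entry_sum_norm m n (Z j)" for j
  proof -
    have "0 \<le> (real j + 1) * N (Z j)"
      using is_norm_on_nonneg[OF Z[of j]] by simp
    then show ?thesis using big[of j] by linarith
  qed
  define W where "W j = blk_scale (1 / entry_sum_norm m n (Z j)) (Z j)" for j
  have W: "W j \<in> mat_space m n" for j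
    by (simp add: W_def Z mat_space_blk_scale)
  have "(\<lambda>j. N (W j)) \<longlonglongrightarrow> 0"
  proof (rule tendsto_sandwich)
    show "\<forall>\<^sub>F j in sequentially. 0 \<le> N (W j)"
      using W by (simp add: is_norm_on_nonneg)
    have "N (W j) \<le> 1 / (real j + 1)" for j
    proof -
      have "N (W j) * (real j + 1) = (real j + 1) * N (Z j) / entry_sum_norm m n (Z j)"
        using is_norm_on_scale[OF Z[of j]] pos[of j] by (simp add: W_def)
      also have "\<dots> \<le> 1"
        using big[of j] pos[of j] by (simp add: pos_divide_le_eq)
      finally show ?thesis
        by (simp add: pos_le_divide_eq)
    qed
    then show "\<forall>\<^sub>F j in sequentially. N (W j) \<le> 1 / (real j + 1)"
      by simp
    show "(\<lambda>j. 1 / (real j + 1)) \<longlonglongrightarrow> 0"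
      using LIMSEQ_inverse_real_of_nat by (simp add: inverse_eq_divide add.commute)
  qed simp
  moreover have "entry_sum_norm m n (W j) = 1" for j
    using pos[of j] by (simp add: W_def entry_sum_norm_blk_scale)
  ultimately show False
    using is_norm_on_not_tendsto_zero W by blast
qed

lemma dual_norm_bdd_above: "bdd_above {tr_inner m n Y Z | Z. Z \<in> mat_space m n \<and> N Z \<le> 1}"
proof -
  obtain C where C: "0 < C" "\<forall>Z\<in>mat_space m n. entry_sum_norm m n Z \<le> C * N Z"
    using entry_sum_norm_le_const_mult_norm by blast
  have "tr_inner m n Y Z \<le> entry_sum_norm m n Y * C" if "Z \<in> mat_space m n" "N Z \<le> 1" for Z
  proof -
    have "entry_sum_norm m n Z \<le> C * N Z"
      using C(2) that(1) by blast
    also have "\<dots> \<le> C"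
      using C(1) that(2) by (simp add: mult_left_le)
    finally have "entry_sum_norm m n Y * entry_sum_norm m n Z \<le> entry_sum_norm m n Y * C"
      by (simp add: entry_sum_norm_def sum_nonneg case_prod_beta mult_left_mono)
    then show ?thesis
      using tr_inner_le_entry_sum_norm[of m n Y Z] by linarith
  qed
  then show ?thesis by (intro bdd_aboveI[of _ "entry_sum_norm m n Y * C"]) blast
qed

lemma dual_norm_ge: "Z \<in> mat_space m n \<Longrightarrow> N Z \<le> 1 \<Longrightarrow> tr_inner m n Y Z \<le> dual_norm m n N Y"
  unfolding dual_norm_def by (rule cSup_upper[OF _ dual_norm_bdd_above]) blast

lemma dual_norm_le:
  assumes "\<And>Z. Z \<in> mat_space m n \<Longrightarrow> N Z \<le> 1 \<Longrightarrow> tr_inner m n Y Z \<le> b"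
  shows "dual_norm m n N Y \<le> b"
  unfolding dual_norm_def
proof (rule cSup_least)
  show "{tr_inner m n Y Z | Z. Z \<in> mat_space m n \<and> N Z \<le> 1} \<noteq> {}"
  proof -
    have "N (\<lambda>r c. 0) \<le> 1" by (simp add: is_norm_on_zero)
    then show ?thesis using mat_space_zero by blast
  qed
qed (use assms in blast)

lemma dual_norm_nonneg: "0 \<le> dual_norm m n N Y"
  using dual_norm_ge[of "\<lambda>r c. 0" Y] by (simp add: is_norm_on_zero)

lemma dual_norm_zero: "dual_norm m n N (\<lambda>r c. 0) = 0"
  using dual_norm_le[of "\<lambda>r c. 0" 0] dual_norm_nonneg[of "\<lambda>r c. 0"] by simp

lemma tr_inner_le_dual_norm_mult:
  assumes Z: "Z \<in> mat_space m n"
  shows "tr_inner m n Y Z \<le> dual_norm m n N Y * N Z"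
proof (cases "N Z = 0")
  case True
  then show ?thesis using is_norm_on_eq_0_iff[OF Z] by simp
next
  case False
  then have pos: "0 < N Z" using is_norm_on_nonneg[OF Z] by simp
  have "tr_inner m n Y Z / N Z = tr_inner m n Y (blk_scale (1 / N Z) Z)"
    by (simp add: tr_inner_blk_scale_right)
  also have "\<dots> \<le> dual_norm m n N Y"
    using pos is_norm_on_scale[OF Z] by (intro dual_norm_ge mat_space_blk_scale Z) simp
  finally show ?thesis using pos by (simp add: divide_le_eq)
qed

lemma lmo_point_inner_le:
  assumes lmo: "is_lmo_point m n N g X t X'" and X: "X \<in> mat_space m n"
  shows "tr_inner m n g (blk_diff X' X) \<le> - t * dual_norm m n N g"
proof -
  have "0 \<le> t"
    using lmo X by (meson is_lmo_point_def is_norm_on_nonneg mat_space_blk_diff order_trans)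
  moreover have "blk_diff X X = (\<lambda>r c. 0)"
    by (simp add: blk_diff_def)
  ultimately have stay: "tr_inner m n g X' \<le> tr_inner m n g X"
    using lmo X by (simp add: is_lmo_point_def is_norm_on_zero)
  from \<open>0 \<le> t\<close> consider "t = 0" | "0 < t" by linarith
  then show ?thesis
  proof cases
    case 1
    then show ?thesis using stay by (simp add: tr_inner_blk_diff_right)
  next
    case 2
    have "dual_norm m n N g \<le> tr_inner m n g (blk_diff X X') / t"
    proof (rule dual_norm_le)
      fix Z assume Z: "Z \<in> mat_space m n" "N Z \<le> 1"
      define Y where "Y = blk_add X (blk_scale (- t) Z)"
      have "blk_diff Y X = blk_scale (- t) Z"
        by (simp add: Y_def blk_diff_def blk_add_def blk_scale_def)
      then have "N (blk_diff Y X) \<le> t"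
        using is_norm_on_scale[OF Z(1)] Z(2) 2 by (simp add: mult_left_le)
      moreover have "Y \<in> mat_space m n"
        using X Z by (simp add: Y_def mat_space_blk_add mat_space_blk_scale)
      ultimately have "tr_inner m n g X' \<le> tr_inner m n g Y"
        using lmo by (simp add: is_lmo_point_def)
      also have "\<dots> = tr_inner m n g X - t * tr_inner m n g Z"
        by (simp add: Y_def tr_inner_blk_add_right tr_inner_blk_scale_right)
      finally show "tr_inner m n g Z \<le> tr_inner m n g (blk_diff X X') / t"
        using 2 by (simp add: tr_inner_blk_diff_right pos_le_divide_eq algebra_simps)
    qed
    then have "t * dual_norm m n N g \<le> tr_inner m n g (blk_diff X X')"
      using 2 by (simp add: pos_le_divide_eq mult.commute)
    then show ?thesis by (simp add: tr_inner_blk_diff_right)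
  qed
qed

text \<open>For \<open>a = 0\<close> the radius and the right-hand side are both \<open>0\<close>, by the convention \<open>x / 0 = 0\<close>.\<close>

lemma lmo_step_decrease:
  assumes lmo: "is_lmo_point m n N g X (dual_norm m n N g / a) X'"
    and X: "X \<in> mat_space m n" and a: "0 \<le> a"
  shows "tr_inner m n g (blk_diff X' X) + a / 2 * (N (blk_diff X' X))\<^sup>2
    \<le> - ((dual_norm m n N g)\<^sup>2 / (2 * a))"
proof -
  define x where "x = dual_norm m n N g"
  define t where "t = x / a"
  have "0 \<le> N (blk_diff X' X)"
    using lmo X by (simp add: is_lmo_point_def is_norm_on_nonneg mat_space_blk_diff)
  then have "(N (blk_diff X' X))\<^sup>2 \<le> t\<^sup>2"
    using lmo by (simp add: is_lmo_point_def t_def x_def power_mono)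
  then have "a / 2 * (N (blk_diff X' X))\<^sup>2 \<le> a / 2 * t\<^sup>2"
    using a by (simp add: mult_left_mono)
  moreover have "tr_inner m n g (blk_diff X' X) \<le> - t * x"
    using lmo_point_inner_le[OF lmo X] by (simp add: t_def x_def)
  moreover have "- t * x + a / 2 * t\<^sup>2 = - (x\<^sup>2 / (2 * a))"
    by (cases "a = 0") (simp_all add: t_def field_simps power2_eq_square)
  ultimately show ?thesis
    by (simp add: x_def)
qed

end

section \<open>The descent lemma\<close>

lemma prod_space_block: "X \<in> prod_space p m n \<Longrightarrow> i < p \<Longrightarrow> X i \<in> mat_space (m i) (n i)"
  by (simp add: prod_space_def)

lemma prod_space_pt_add: "X \<in> prod_space p m n \<Longrightarrow> Y \<in> prod_space p m n \<Longrightarrow> pt_add X Y \<in> prod_space p m n"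
  by (auto simp: prod_space_def mat_space_blk_add pt_add_def) (auto simp: blk_add_def)

lemma prod_space_pt_diff: "X \<in> prod_space p m n \<Longrightarrow> Y \<in> prod_space p m n \<Longrightarrow> pt_diff X Y \<in> prod_space p m n"
  by (auto simp: prod_space_def mat_space_blk_diff pt_diff_def) (auto simp: blk_diff_def)

lemma prod_space_blk_scale: "D \<in> prod_space p m n \<Longrightarrow> (\<lambda>i. blk_scale s (D i)) \<in> prod_space p m n"
  by (auto simp: prod_space_def mat_space_blk_scale) (auto simp: blk_scale_def)

lemma S_inner_blk_scale_right: "S_inner p m n Y (\<lambda>i. blk_scale s (D i)) = s * S_inner p m n Y D"
  by (simp add: S_inner_def tr_inner_blk_scale_right sum_distrib_left)

lemma S_inner_self_nonneg: "0 \<le> S_inner p m n D D"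
  by (auto simp: S_inner_def tr_inner_def intro!: sum_nonneg)

lemma S_norm_blk_scale: "S_norm p m n (\<lambda>i. blk_scale s (D i)) = \<bar>s\<bar> * S_norm p m n D"
proof -
  have "S_inner p m n (\<lambda>i. blk_scale s (D i)) (\<lambda>i. blk_scale s (D i)) = s\<^sup>2 * S_inner p m n D D"
    by (simp add: S_inner_def tr_inner_blk_scale_left tr_inner_blk_scale_right sum_distrib_left
        power2_eq_square mult_ac)
  then show ?thesis by (simp add: S_norm_def real_sqrt_mult)
qed

definition pt_line :: "pt \<Rightarrow> pt \<Rightarrow> real \<Rightarrow> pt" where
  "pt_line X D \<tau> = pt_add X (\<lambda>i. blk_scale \<tau> (D i))"

lemma prod_space_pt_line:
  "X \<in> prod_space p m n \<Longrightarrow> D \<in> prod_space p m n \<Longrightarrow> pt_line X D \<tau> \<in> prod_space p m n"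
  by (simp add: pt_line_def prod_space_pt_add prod_space_blk_scale)

lemma pt_line_0 [simp]: "pt_line X D 0 = X"
  by (simp add: pt_line_def pt_add_def blk_add_def blk_scale_def)

lemma pt_line_1_pt_diff [simp]: "pt_line X (pt_diff Y X) 1 = Y"
  by (simp add: pt_line_def pt_add_def pt_diff_def blk_add_def blk_diff_def blk_scale_def)

lemma pt_line_shift: "pt_add (pt_line X D \<tau>) (\<lambda>i. blk_scale h (D i)) = pt_line X D (\<tau> + h)"
  by (simp add: pt_line_def pt_add_def blk_add_def blk_scale_def fun_eq_iff distrib_right)

lemma has_cont_gradient_on_line_derivative:
  assumes grad: "has_cont_gradient_on p m n f G"
    and X: "X \<in> prod_space p m n" and D: "D \<in> prod_space p m n"
  shows "((\<lambda>\<tau>. f (pt_line X D \<tau>)) has_real_derivative S_inner p m n (G (pt_line X D \<tau>)) D) (at \<tau>)"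
  unfolding DERIV_def
proof (rule LIM_I)
  fix r :: real assume r: "0 < r"
  define Y where "Y = pt_line X D \<tau>"
  define c where "c = S_inner p m n (G Y) D"
  define s where "s = S_norm p m n D + 1"
  have s: "0 < s" "S_norm p m n D < s"
    by (simp_all add: s_def S_norm_def S_inner_self_nonneg add_nonneg_pos)
  have "Y \<in> prod_space p m n" and "0 < r / s"
    using X D r s by (simp_all add: Y_def prod_space_pt_line)
  then obtain d where d: "0 < d" and frechet: "\<forall>H\<in>prod_space p m n. S_norm p m n H < d \<longrightarrow>
      \<bar>f (pt_add Y H) - f Y - S_inner p m n (G Y) H\<bar> \<le> r / s * S_norm p m n H"
    using grad unfolding has_cont_gradient_on_def by blast
  show "\<exists>e>0. \<forall>h. h \<noteq> 0 \<and> norm (h - 0) < e \<longrightarrow>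
      norm ((f (pt_line X D (\<tau> + h)) - f (pt_line X D \<tau>)) / h - S_inner p m n (G (pt_line X D \<tau>)) D) < r"
  proof (intro exI[of _ "d / s"] conjI allI impI)
    show "0 < d / s" using d s by simp
    fix h :: real assume h: "h \<noteq> 0 \<and> norm (h - 0) < d / s"
    define H where "H = (\<lambda>i. blk_scale h (D i))"
    have norm_H: "S_norm p m n H = \<bar>h\<bar> * S_norm p m n D"
      by (simp add: H_def S_norm_blk_scale)
    also have "\<dots> \<le> \<bar>h\<bar> * s"
      using s by (simp add: mult_left_mono less_imp_le)
    also have "\<dots> < d"
      using h s by (simp add: pos_less_divide_eq)
    finally have "\<bar>f (pt_add Y H) - f Y - S_inner p m n (G Y) H\<bar> \<le> r / s * S_norm p m n H"
      using frechet D by (simp add: H_def prod_space_blk_scale)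
    then have "\<bar>f (pt_line X D (\<tau> + h)) - f Y - h * c\<bar> \<le> r / s * (\<bar>h\<bar> * S_norm p m n D)"
      by (simp add: H_def Y_def c_def pt_line_shift S_inner_blk_scale_right S_norm_blk_scale)
    also have "\<dots> < r * \<bar>h\<bar>"
      using h r s by (simp add: field_simps)
    finally have "\<bar>f (pt_line X D (\<tau> + h)) - f Y - h * c\<bar> < r * \<bar>h\<bar>" .
    moreover have "(f (pt_line X D (\<tau> + h)) - f Y) / h - c = (f (pt_line X D (\<tau> + h)) - f Y - h * c) / h"
      using h by (simp add: field_simps)
    ultimately show "norm ((f (pt_line X D (\<tau> + h)) - f (pt_line X D \<tau>)) / h
        - S_inner p m n (G (pt_line X D \<tau>)) D) < r"
      using h by (simp add: Y_def c_def abs_divide pos_divide_less_eq)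
  qed
qed

locale layerwise_smooth =
  fixes p :: nat and m n :: "nat \<Rightarrow> nat" and N :: "nat \<Rightarrow> blk \<Rightarrow> real"
    and f :: "pt \<Rightarrow> real" and G :: "pt \<Rightarrow> pt" and L0 L1 :: "nat \<Rightarrow> real"
  assumes norms: "\<And>i. i < p \<Longrightarrow> is_norm_on (m i) (n i) (N i)"
    and grad: "has_cont_gradient_on p m n f G"
    and L_nonneg: "\<And>i. i < p \<Longrightarrow> 0 \<le> L0 i \<and> 0 \<le> L1 i"
    and smooth: "\<And>i Y Z. i < p \<Longrightarrow> Y \<in> prod_space p m n \<Longrightarrow> Z \<in> prod_space p m n \<Longrightarrow>
        dual_norm (m i) (n i) (N i) (blk_diff (G Y i) (G Z i))
          \<le> (L0 i + L1 i * dual_norm (m i) (n i) (N i) (G Y i)) * N i (blk_diff (Y i) (Z i))"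
begin

text \<open>The smoothness bound is applied with the anchor \<open>X\<close> as its first argument, so the
  constant involves only the gradient at \<open>X\<close>, not along the segment.\<close>

lemma gradient_increment_along_line:
  assumes X: "X \<in> prod_space p m n" and D: "D \<in> prod_space p m n" and \<tau>: "0 \<le> \<tau>"
  shows "S_inner p m n (G (pt_line X D \<tau>)) D - S_inner p m n (G X) D
    \<le> \<tau> * (\<Sum>i<p. (L0 i + L1 i * dual_norm (m i) (n i) (N i) (G X i)) * (N i (D i))\<^sup>2)"
proof -
  define Y where "Y = pt_line X D \<tau>"
  have Y: "Y \<in> prod_space p m n"
    using X D by (simp add: Y_def prod_space_pt_line)
  have "tr_inner (m i) (n i) (blk_diff (G Y i) (G X i)) (D i)
      \<le> \<tau> * ((L0 i + L1 i * dual_norm (m i) (n i) (N i) (G X i)) * (N i (D i))\<^sup>2)"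
    if i: "i < p" for i
  proof -
    note norm = norms[OF i]
    have Di: "D i \<in> mat_space (m i) (n i)"
      using D i by (rule prod_space_block)
    have "blk_diff (X i) (Y i) = blk_scale (- \<tau>) (D i)"
      by (simp add: Y_def pt_line_def pt_add_def blk_add_def blk_diff_def blk_scale_def)
    then have step: "N i (blk_diff (X i) (Y i)) = \<tau> * N i (D i)"
      using is_norm_on_scale[OF norm Di] \<tau> by simp
    have "tr_inner (m i) (n i) (blk_diff (G Y i) (G X i)) (D i)
        = tr_inner (m i) (n i) (blk_diff (G X i) (G Y i)) (blk_scale (- 1) (D i))"
      by (simp add: tr_inner_blk_scale_right tr_inner_blk_diff_left)
    also have "\<dots> \<le> dual_norm (m i) (n i) (N i) (blk_diff (G X i) (G Y i)) * N i (blk_scale (- 1) (D i))"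
      by (rule tr_inner_le_dual_norm_mult[OF norm mat_space_blk_scale[OF Di]])
    also have "\<dots> = dual_norm (m i) (n i) (N i) (blk_diff (G X i) (G Y i)) * N i (D i)"
      using is_norm_on_scale[OF norm Di] by simp
    also have "\<dots> \<le> (L0 i + L1 i * dual_norm (m i) (n i) (N i) (G X i)) * (\<tau> * N i (D i)) * N i (D i)"
      using smooth[OF i X Y] is_norm_on_nonneg[OF norm Di] step by (intro mult_right_mono) simp_all
    finally show ?thesis
      by (simp add: power2_eq_square mult_ac)
  qed
  then have "(\<Sum>i<p. tr_inner (m i) (n i) (blk_diff (G Y i) (G X i)) (D i))
      \<le> (\<Sum>i<p. \<tau> * ((L0 i + L1 i * dual_norm (m i) (n i) (N i) (G X i)) * (N i (D i))\<^sup>2))"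
    by (intro sum_mono) simp
  then show ?thesis
    by (simp add: Y_def S_inner_def tr_inner_blk_diff_left sum_subtractf sum_distrib_left)
qed

lemma descent_inequality:
  assumes X: "X \<in> prod_space p m n" and X': "X' \<in> prod_space p m n"
  shows "f X' \<le> f X + (\<Sum>i<p. tr_inner (m i) (n i) (G X i) (blk_diff (X' i) (X i))
      + (L0 i + L1 i * dual_norm (m i) (n i) (N i) (G X i)) / 2 * (N i (blk_diff (X' i) (X i)))\<^sup>2)"
proof -
  define D where "D = pt_diff X' X"
  have D: "D \<in> prod_space p m n"
    using X' X by (simp add: D_def prod_space_pt_diff)
  define c where "c = S_inner p m n (G X) D"
  define A where "A = (\<Sum>i<p. (L0 i + L1 i * dual_norm (m i) (n i) (N i) (G X i)) * (N i (D i))\<^sup>2)"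
  define \<phi> where "\<phi> \<tau> = f (pt_line X D \<tau>) - \<tau> * c - \<tau>\<^sup>2 / 2 * A" for \<tau>
  have "\<phi> 1 \<le> \<phi> 0"
  proof (rule DERIV_nonpos_imp_nonincreasing[of 0 1])
    fix \<tau> :: real assume "0 \<le> \<tau>" "\<tau> \<le> 1"
    have "(\<phi> has_real_derivative S_inner p m n (G (pt_line X D \<tau>)) D - c - \<tau> * A) (at \<tau>)"
      unfolding \<phi>_def
      by (auto intro!: derivative_eq_intros has_cont_gradient_on_line_derivative[OF grad X D]
          simp: power2_eq_square)
    moreover have "S_inner p m n (G (pt_line X D \<tau>)) D - c - \<tau> * A \<le> 0"
      using gradient_increment_along_line[OF X D \<open>0 \<le> \<tau>\<close>] by (simp add: c_def A_def)
    ultimately show "\<exists>y. (\<phi> has_real_derivative y) (at \<tau>) \<and> y \<le> 0"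
      by blast
  qed simp
  then have "f X' \<le> f X + (c + A / 2)"
    by (simp add: \<phi>_def D_def)
  also have "c + A / 2 = (\<Sum>i<p. tr_inner (m i) (n i) (G X i) (blk_diff (X' i) (X i))
      + (L0 i + L1 i * dual_norm (m i) (n i) (N i) (G X i)) / 2 * (N i (blk_diff (X' i) (X i)))\<^sup>2)"
    by (simp add: c_def A_def S_inner_def D_def pt_diff_def sum.distrib sum_divide_distrib)
  finally show ?thesis .
qed

end

section \<open>Convergence of deterministic Gluon\<close>

lemma linear_minus_quadratic_le:
  fixes a x l :: real
  assumes "0 \<le> a" and "a = 0 \<Longrightarrow> x = 0"
  shows "l * x - l\<^sup>2 * a / 2 \<le> x\<^sup>2 / (2 * a)"
proof (cases "a = 0")
  case False
  with assms have "0 < a" by simp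
  then have "x\<^sup>2 / (2 * a) - (l * x - l\<^sup>2 * a / 2) = (x - l * a)\<^sup>2 / (2 * a)"
    by (simp add: field_simps power2_eq_square)
  moreover have "0 \<le> (x - l * a)\<^sup>2 / (2 * a)"
    using \<open>0 < a\<close> by simp
  ultimately show ?thesis by linarith
qed (use assms in simp)

text \<open>The step \<open>u = \<tau> / (A + c \<tau>)\<close> maximises the right-hand side at \<open>T = \<tau>\<close>, where its
  value is the left-hand side.\<close>

lemma quadratic_gain_gt:
  fixes A c \<tau> T :: real
  assumes A: "0 \<le> A" and \<tau>: "0 < \<tau>" "\<tau> < T" and B: "0 < A + c * \<tau>"
  shows "\<tau>\<^sup>2 / (2 * (A + c * \<tau>))
    < \<tau> / (A + c * \<tau>) * T - (\<tau> / (A + c * \<tau>))\<^sup>2 / 2 * (A + c * T)"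
proof -
  define B where "B = A + c * \<tau>"
  define u where "u = \<tau> / B"
  have A_eq: "A = B - c * \<tau>"
    by (simp add: B_def)
  have B_pos: "0 < B"
    using B by (simp add: B_def)
  have "0 < u" using \<tau> B_pos by (simp add: u_def)
  moreover have "u * c \<le> 1"
    using A B_pos by (simp add: u_def A_eq field_simps)
  ultimately have "0 < u * (1 - u * c / 2)"
    by simp
  then have "u * (1 - u * c / 2) * \<tau> - u\<^sup>2 / 2 * A < u * (1 - u * c / 2) * T - u\<^sup>2 / 2 * A"
    using \<tau> by (simp add: mult_strict_left_mono)
  moreover have "u * (1 - u * c / 2) * \<tau> - u\<^sup>2 / 2 * A = \<tau>\<^sup>2 / (2 * B)"
    using B_pos unfolding A_eq by (simp add: u_def field_simps power2_eq_square)
  moreover have "u * (1 - u * c / 2) * T - u\<^sup>2 / 2 * A = u * T - u\<^sup>2 / 2 * (A + c * T)"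
    by (simp add: field_simps power2_eq_square)
  ultimately show ?thesis
    by (simp add: u_def B_def)
qed

locale gluon_run = layerwise_smooth +
  fixes X :: "nat \<Rightarrow> pt"
  assumes bdd: "bdd_below (f ` prod_space p m n)"
    and X_in: "\<And>k. X k \<in> prod_space p m n"
    and well_def: "\<And>k i. i < p \<Longrightarrow> G (X k) i \<noteq> (\<lambda>r c. 0) \<Longrightarrow>
        0 < L0 i + L1 i * dual_norm (m i) (n i) (N i) (G (X k) i)"
    and lmo: "\<And>k i. i < p \<Longrightarrow> is_lmo_point (m i) (n i) (N i) (G (X k) i) (X k i)
        (dual_norm (m i) (n i) (N i) (G (X k) i)
          / (L0 i + L1 i * dual_norm (m i) (n i) (N i) (G (X k) i))) (X (Suc k) i)"
begin

definition grad_norm :: "nat \<Rightarrow> nat \<Rightarrow> real" where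
  "grad_norm k i = dual_norm (m i) (n i) (N i) (G (X k) i)"

definition decrease :: "nat \<Rightarrow> real" where
  "decrease k = (\<Sum>i<p. (grad_norm k i)\<^sup>2 / (2 * (L0 i + L1 i * grad_norm k i)))"

lemma grad_norm_nonneg: "i < p \<Longrightarrow> 0 \<le> grad_norm k i"
  by (simp add: grad_norm_def dual_norm_nonneg norms)

lemma f_step_le: "f (X (Suc k)) \<le> f (X k) - decrease k"
proof -
  have "tr_inner (m i) (n i) (G (X k) i) (blk_diff (X (Suc k) i) (X k i))
      + (L0 i + L1 i * grad_norm k i) / 2 * (N i (blk_diff (X (Suc k) i) (X k i)))\<^sup>2
      \<le> - ((grad_norm k i)\<^sup>2 / (2 * (L0 i + L1 i * grad_norm k i)))" if i: "i < p" for i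
    using lmo_step_decrease[OF norms[OF i] lmo[OF i] prod_space_block[OF X_in i]]
      L_nonneg[OF i] grad_norm_nonneg[OF i]
    by (simp add: grad_norm_def)
  then have "(\<Sum>i<p. tr_inner (m i) (n i) (G (X k) i) (blk_diff (X (Suc k) i) (X k i))
      + (L0 i + L1 i * grad_norm k i) / 2 * (N i (blk_diff (X (Suc k) i) (X k i)))\<^sup>2)
      \<le> - decrease k"
    unfolding decrease_def sum_negf[symmetric] by (intro sum_mono) simp
  then show ?thesis
    using descent_inequality[OF X_in[of k] X_in[of "Suc k"]] by (simp add: grad_norm_def)
qed

lemma sum_decrease_le: "(\<Sum>k<K. decrease k) \<le> f (X 0) - Inf (f ` prod_space p m n)"
proof -
  have "f (X K) \<le> f (X 0) - (\<Sum>k<K. decrease k)"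
  proof (induction K)
    case (Suc K)
    then show ?case using f_step_le[of K] by simp
  qed simp
  moreover have "Inf (f ` prod_space p m n) \<le> f (X K)"
    using bdd X_in by (intro cInf_lower) auto
  ultimately show ?thesis by linarith
qed

lemma decrease_ge:
  "(\<Sum>i<p. l i * grad_norm k i - (l i)\<^sup>2 * (L0 i + L1 i * grad_norm k i) / 2) \<le> decrease k"
  unfolding decrease_def
proof (intro sum_mono linear_minus_quadratic_le)
  fix i assume "i \<in> {..<p}"
  then have i: "i < p" by simp
  show "0 \<le> L0 i + L1 i * grad_norm k i"
    using L_nonneg[OF i] grad_norm_nonneg[OF i] by simp
  show "grad_norm k i = 0" if "L0 i + L1 i * grad_norm k i = 0"
    using well_def[OF i, of k] that dual_norm_zero[OF norms[OF i]] unfolding grad_norm_def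
    by (cases "G (X k) i = (\<lambda>r c. 0)") auto
qed

lemma decrease_gt:
  fixes w :: "nat \<Rightarrow> real" and c \<epsilon> :: real
  assumes w: "\<And>i. i < p \<Longrightarrow> 0 \<le> w i \<and> w i * L1 i \<le> c" and \<epsilon>: "0 < \<epsilon>"
    and B: "0 < (\<Sum>i<p. (w i)\<^sup>2 * L0 i) + c * \<epsilon>"
    and big: "\<epsilon> < (\<Sum>i<p. w i * grad_norm k i)"
  shows "\<epsilon>\<^sup>2 / (2 * ((\<Sum>i<p. (w i)\<^sup>2 * L0 i) + c * \<epsilon>)) < decrease k"
proof -
  define A where "A = (\<Sum>i<p. (w i)\<^sup>2 * L0 i)"
  define T where "T = (\<Sum>i<p. w i * grad_norm k i)"
  define u where "u = \<epsilon> / (A + c * \<epsilon>)"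
  have A: "0 \<le> A"
    using L_nonneg by (auto simp: A_def intro!: sum_nonneg)
  have "\<epsilon>\<^sup>2 / (2 * (A + c * \<epsilon>)) < u * T - u\<^sup>2 / 2 * (A + c * T)"
    using quadratic_gain_gt[OF A \<epsilon> big] B by (simp add: u_def T_def A_def)
  also have "\<dots> \<le> u * T - u\<^sup>2 / 2 * (A + (\<Sum>i<p. (w i)\<^sup>2 * L1 i * grad_norm k i))"
  proof -
    have "(w i)\<^sup>2 * L1 i * grad_norm k i \<le> c * (w i * grad_norm k i)" if "i < p" for i
    proof -
      have "(w i)\<^sup>2 * L1 i * grad_norm k i = (w i * L1 i) * (w i * grad_norm k i)"
        by (simp add: power2_eq_square mult_ac)
      also have "\<dots> \<le> c * (w i * grad_norm k i)"
        using w[OF that] grad_norm_nonneg[OF that] by (intro mult_right_mono) simp_all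
      finally show ?thesis .
    qed
    then have "(\<Sum>i<p. (w i)\<^sup>2 * L1 i * grad_norm k i) \<le> c * T"
      unfolding T_def sum_distrib_left by (intro sum_mono) simp
    then show ?thesis by (simp add: mult_left_mono)
  qed
  also have "\<dots> = (\<Sum>i<p. u * (w i * grad_norm k i)
      - u\<^sup>2 / 2 * ((w i)\<^sup>2 * L0 i + (w i)\<^sup>2 * L1 i * grad_norm k i))"
    by (simp only: T_def A_def sum_subtractf sum.distrib sum_distrib_left distrib_left)
  also have "\<dots> = (\<Sum>i<p. (u * w i) * grad_norm k i - (u * w i)\<^sup>2 * (L0 i + L1 i * grad_norm k i) / 2)"
    by (intro sum.cong refl) (simp add: power2_eq_square field_simps)
  also have "\<dots> \<le> decrease k"
    by (rule decrease_ge)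
  finally show ?thesis
    by (simp add: A_def)
qed

lemma weighted_grad_norm_rate:
  fixes w :: "nat \<Rightarrow> real" and c \<epsilon> :: real
  defines "K \<equiv> \<lceil>2 * (f (X 0) - Inf (f ` prod_space p m n)) * ((\<Sum>i<p. (w i)\<^sup>2 * L0 i) + c * \<epsilon>) / \<epsilon>\<^sup>2\<rceil>"
  assumes w: "\<And>i. i < p \<Longrightarrow> 0 \<le> w i \<and> w i * L1 i \<le> c" and \<epsilon>: "0 < \<epsilon>" and K: "1 \<le> K"
  shows "Min ((\<lambda>k. \<Sum>i<p. w i * grad_norm k i) ` {..<nat K}) \<le> \<epsilon>"
proof (rule ccontr)
  define \<Delta> where "\<Delta> = f (X 0) - Inf (f ` prod_space p m n)"
  define B where "B = (\<Sum>i<p. (w i)\<^sup>2 * L0 i) + c * \<epsilon>"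
  have \<Delta>: "0 \<le> \<Delta>"
    using sum_decrease_le[of 0] by (simp add: \<Delta>_def)
  have "0 < 2 * \<Delta> * B / \<epsilon>\<^sup>2"
    using K by (simp add: K_def \<Delta>_def B_def)
  then have B: "0 < B"
    using \<Delta> \<epsilon> by (simp add: zero_less_divide_iff zero_less_mult_iff)
  assume "\<not> ?thesis"
  moreover have nonempty: "{..<nat K} \<noteq> {}"
    using K by (simp add: lessThan_empty_iff)
  ultimately have "\<epsilon> < (\<Sum>i<p. w i * grad_norm k i)" if "k < nat K" for k
    using that by (subst (asm) not_le, subst (asm) Min_gr_iff) auto
  then have "\<epsilon>\<^sup>2 / (2 * B) < decrease k" if "k < nat K" for k
    using decrease_gt[OF w \<epsilon>] B that by (simp add: B_def)
  then have "(\<Sum>k<nat K. \<epsilon>\<^sup>2 / (2 * B)) < (\<Sum>k<nat K. decrease k)"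
    using nonempty by (intro sum_strict_mono) auto
  also have "\<dots> \<le> \<Delta>"
    using sum_decrease_le by (simp add: \<Delta>_def)
  finally have "real (nat K) * \<epsilon>\<^sup>2 < 2 * \<Delta> * B"
    using B by (simp add: field_simps)
  moreover have "2 * \<Delta> * B / \<epsilon>\<^sup>2 \<le> real (nat K)"
    using K by (simp add: K_def \<Delta>_def B_def)
  ultimately show False
    using \<epsilon> by (simp add: field_simps)
qed

lemma sum_grad_norm_rate:
  fixes \<epsilon> :: real
  defines "\<Delta>0 \<equiv> f (X 0) - Inf (f ` prod_space p m n)"
  defines "K \<equiv> \<lceil>2 * \<Delta>0 * (\<Sum>i<p. L0 i) / \<epsilon>\<^sup>2 + 2 * \<Delta>0 * Max (L1 ` {..<p}) / \<epsilon>\<rceil>"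
  assumes \<epsilon>: "0 < \<epsilon>" and K: "1 \<le> K"
  shows "Min ((\<lambda>k. \<Sum>i<p. grad_norm k i) ` {..<nat K}) \<le> \<epsilon>"
proof -
  have "K = \<lceil>2 * \<Delta>0 * ((\<Sum>i<p. 1\<^sup>2 * L0 i) + Max (L1 ` {..<p}) * \<epsilon>) / \<epsilon>\<^sup>2\<rceil>"
    using \<epsilon> by (simp add: K_def field_simps power2_eq_square)
  then show ?thesis
    using weighted_grad_norm_rate[of "\<lambda>_. 1" "Max (L1 ` {..<p})" \<epsilon>] \<epsilon> K
    by (simp add: \<Delta>0_def)
qed

lemma inverse_L1_weighted_rate:
  fixes \<epsilon> :: real
  defines "\<Delta>0 \<equiv> f (X 0) - Inf (f ` prod_space p m n)"
    and "H \<equiv> 1 / real p * (\<Sum>j<p. 1 / L1 j)"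
  defines "K \<equiv> \<lceil>2 * \<Delta>0 * (\<Sum>i<p. L0 i / (L1 i)\<^sup>2) / (\<epsilon>\<^sup>2 * H\<^sup>2) + 2 * \<Delta>0 / (\<epsilon> * H)\<rceil>"
  assumes p: "0 < p" and L1_pos: "\<And>i. i < p \<Longrightarrow> 0 < L1 i" and \<epsilon>: "0 < \<epsilon>" and K: "1 \<le> K"
  shows "Min ((\<lambda>k. \<Sum>i<p. 1 / L1 i / H * grad_norm k i) ` {..<nat K}) \<le> \<epsilon>"
proof -
  have H_pos: "0 < H"
    unfolding H_def using p L1_pos by (intro mult_pos_pos sum_pos) auto
  define C where "C = (\<Sum>i<p. L0 i / (L1 i)\<^sup>2)"
  have "2 * \<Delta>0 * C / (\<epsilon>\<^sup>2 * H\<^sup>2) + 2 * \<Delta>0 / (\<epsilon> * H) = 2 * \<Delta>0 * (C / H\<^sup>2 + 1 / H * \<epsilon>) / \<epsilon>\<^sup>2"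
    using \<epsilon> H_pos by (simp add: field_simps power2_eq_square)
  moreover have "(\<Sum>i<p. (1 / L1 i / H)\<^sup>2 * L0 i) = C / H\<^sup>2"
    by (simp add: C_def sum_divide_distrib power_divide power_mult_distrib)
  ultimately have "K = \<lceil>2 * \<Delta>0 * ((\<Sum>i<p. (1 / L1 i / H)\<^sup>2 * L0 i) + 1 / H * \<epsilon>) / \<epsilon>\<^sup>2\<rceil>"
    by (simp add: K_def C_def)
  moreover have "0 \<le> 1 / L1 i / H \<and> 1 / L1 i / H * L1 i \<le> 1 / H" if "i < p" for i
    using L1_pos[OF that] H_pos by (simp add: less_imp_le)
  ultimately show ?thesis
    using weighted_grad_norm_rate[of "\<lambda>i. 1 / L1 i / H" "1 / H" \<epsilon>] \<epsilon> K
    by (simp add: \<Delta>0_def)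
qed

end

theorem theorem3:
  fixes p :: nat and m n :: "nat \<Rightarrow> nat"
    and N :: "nat \<Rightarrow> blk \<Rightarrow> real"
    and f :: "pt \<Rightarrow> real" and G :: "pt \<Rightarrow> pt"
    and L0 L1 :: "nat \<Rightarrow> real" and \<epsilon> :: real
    and X :: "nat \<Rightarrow> pt"
  assumes p_pos: "0 < p"
    and norms: "\<forall>i<p. is_norm_on (m i) (n i) (N i)"
    and grad: "has_cont_gradient_on p m n f G"
    and bdd: "bdd_below (f ` prod_space p m n)"
    and L_nonneg: "\<forall>i<p. 0 \<le> L0 i \<and> 0 \<le> L1 i"
    and smooth: "\<forall>i<p. \<forall>Y\<in>prod_space p m n. \<forall>Z\<in>prod_space p m n.
        dual_norm (m i) (n i) (N i) (blk_diff (G Y i) (G Z i))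
          \<le> (L0 i + L1 i * dual_norm (m i) (n i) (N i) (G Y i)) * N i (blk_diff (Y i) (Z i))"
    and eps: "0 < \<epsilon>"
    and X_in: "\<forall>k. X k \<in> prod_space p m n"
    and well_def: "\<forall>k. \<forall>i<p. G (X k) i \<noteq> (\<lambda>r c. 0) \<longrightarrow>
        0 < L0 i + L1 i * dual_norm (m i) (n i) (N i) (G (X k) i)"
    and step: "\<forall>k. \<forall>i<p.
        (let g = G (X k) i;
             t = (if g = (\<lambda>r c. 0) then 0
                  else dual_norm (m i) (n i) (N i) g
                       / (L0 i + L1 i * dual_norm (m i) (n i) (N i) g));
             C = {Y \<in> mat_space (m i) (n i). N i (blk_diff Y (X k i)) \<le> t}
         in X (Suc k) i \<in> C \<and>
            (\<forall>Y\<in>C. tr_inner (m i) (n i) g (X (Suc k) i) \<le> tr_inner (m i) (n i) g Y))"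
  shows
    "(let finf = Inf (f ` prod_space p m n);
          \<Delta>0 = f (X 0) - finf;
          L1max = Max (L1 ` {..<p});
          K = \<lceil>2 * \<Delta>0 * (\<Sum>i<p. L0 i) / \<epsilon>\<^sup>2 + 2 * \<Delta>0 * L1max / \<epsilon>\<rceil>
      in 1 \<le> K \<longrightarrow>
         Min ((\<lambda>k. \<Sum>i<p. dual_norm (m i) (n i) (N i) (G (X k) i)) ` {..<nat K}) \<le> \<epsilon>)
   \<and>
    ((\<forall>i<p. 0 < L1 i) \<longrightarrow>
     (let finf = Inf (f ` prod_space p m n);
          \<Delta>0 = f (X 0) - finf;
          H = (1 / real p) * (\<Sum>j<p. 1 / L1 j);
          K = \<lceil>2 * \<Delta>0 * (\<Sum>i<p. L0 i / (L1 i)\<^sup>2) / (\<epsilon>\<^sup>2 * H\<^sup>2) + 2 * \<Delta>0 / (\<epsilon> * H)\<rceil>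
      in 1 \<le> K \<longrightarrow>
         Min ((\<lambda>k. \<Sum>i<p. ((1 / L1 i) / H) * dual_norm (m i) (n i) (N i) (G (X k) i))
               ` {..<nat K}) \<le> \<epsilon>))"
proof -
  \<comment> \<open>The case split in the radius is redundant: the dual norm of \<open>0\<close> is \<open>0\<close>.\<close>
  have lmo: "is_lmo_point (m i) (n i) (N i) (G (X k) i) (X k i)
      (dual_norm (m i) (n i) (N i) (G (X k) i)
        / (L0 i + L1 i * dual_norm (m i) (n i) (N i) (G (X k) i))) (X (Suc k) i)"
    if i: "i < p" for k i
    using step[rule_format, OF i, of k] dual_norm_zero[OF norms[rule_format, OF i]]
    by (cases "G (X k) i = (\<lambda>r c. 0)") (auto simp: Let_def is_lmo_point_def)
  interpret gluon_run p m n N f G L0 L1 X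
    by unfold_locales (use norms grad L_nonneg smooth bdd X_in well_def lmo in auto)
  show ?thesis
    using sum_grad_norm_rate[OF eps] inverse_L1_weighted_rate[OF p_pos _ eps]
    unfolding Let_def grad_norm_def by blast
qed

end
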